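(* Let $(\mathfrak g,[\cdot,\cdot],\llbracket\cdot,\cdot,\cdot\rrbracket)$ and $(\mathfrak g^*,[\cdot,\cdot]_*,\llbracket\cdot,\cdot,\cdot\rrbracket_* )$ be Lie-Yamaguti algebras (on a vector space and its dual). Then the quadruple $(\mathfrak g,\mathfrak g^*;(\mathrm{ad}^*,-\mathcal R^*\tau),(\mathfrak{ad}^*,-\mathfrak R^*\tau))$ is a matched pair of Lie-Yamaguti algebras (i.e. the double brackets below define a Lie-Yamaguti algebra on $\mathfrak g\oplus\mathfrak g^*$) if and only if there is a Lie-Yamaguti algebra structure on $\mathfrak g\oplus\mathfrak g^*$ for which $((\mathfrak g\oplus\mathfrak g^*,\mathcal B_0),\mathfrak g,\mathfrak g^* )$ is a Manin triple, where $\mathcal B_0(x+\xi,y+\eta)=\langle x,\eta\rangle+\langle\xi,y\rangle$ (in which case that structure is given by the double brackets).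
   Context: All vector spaces are finite-dimensional over a field of characteristic zero. A Lie-Yamaguti algebra is a vector space $\mathfrak g$ with a skew-symmetric bilinear map $[\cdot,\cdot]$ and a trilinear map $\llbracket\cdot,\cdot,\cdot\rrbracket$ skew-symmetric in its first two arguments satisfying: (LY1) $[[x,y],z]+[[y,z],x]+[[z,x],y]+\llbracket x,y,z\rrbracket+\llbracket y,z,x\rrbracket+\llbracket z,x,y\rrbracket=0$; (LY2) $\llbracket [x,y],z,w\rrbracket+\llbracket [y,z],x,w\rrbracket+\llbracket [z,x],y,w\rrbracket=0$; (LY3) $\llbracket x,y,[z,w]\rrbracket=[\llbracket x,y,z\rrbracket,w]+[z,\llbracket x,y,w\rrbracket]$; (LY4) $\llbracket x,y,\llbracket z,w,t\rrbracket\rrbracket=\llbracket\llbracket x,y,z\rrbracket,w,t\rrbracket+\llbracket z,\llbracket x,y,w\rrbracket,t\rrbracket+\llbracket z,w,\llbracket x,y,t\rrbracket\rrbracket$. Coadjoint maps: on $\mathfrak g^*$, $\langle\mathrm{ad}^*_x\alpha,z\rangle=-\langle\alpha,[x,z]\rangle$, $\langle\mathcal R^*(x,y)\alpha,z\rangle=-\langle\alpha,\llbracket z,x,y\rrbracket\rangle$, $\langle\mathcal L^*(x,y)\alpha,z\rangle=-\langle\alpha,\llbracket x,y,z\rrbracket\rangle$; on $\mathfrak g$, $\langle\mathfrak{ad}^*_\xi x,\eta\rangle=-\langle x,[\xi,\eta]_*\rangle$, $\langle\mathfrak R^*(\xi,\eta)x,\zeta\rangle=-\langle x,\llbracket\zeta,\xi,\eta\rrbracket_*\rangle$,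 $\langle\mathfrak L^*(\xi,\eta)x,\zeta\rangle=-\langle x,\llbracket\xi,\eta,\zeta\rrbracket_*\rangle$. ($-\mathcal R^*\tau$ means $(x,y)\mapsto-\mathcal R^*(y,x)$, similarly for $-\mathfrak R^*\tau$.) The double brackets on $\mathfrak g\oplus\mathfrak g^*$ are $[x+\xi,y+\eta]=[x,y]+\mathrm{ad}^*_x\eta-\mathrm{ad}^*_y\xi+[\xi,\eta]_*+\mathfrak{ad}^*_\xi y-\mathfrak{ad}^*_\eta x$ and $\llbracket x+\xi,y+\eta,z+\zeta\rrbracket=\llbracket x,y,z\rrbracket+\mathcal L^*(x,y)\zeta-\mathcal R^*(z,y)\xi+\mathcal R^*(z,x)\eta+\llbracket\xi,\eta,\zeta\rrbracket_*+\mathfrak L^*(\xi,\eta)z-\mathfrak R^*(\zeta,\eta)x+\mathfrak R^*(\zeta,\xi)y$; the quadruple is called a matched pair when these form a Lie-Yamaguti algebra. A quadratic Lie-Yamaguti algebra $(\mathfrak h,\mathcal B)$ is a Lie-Yamaguti algebra with a nondegenerate symmetric bilinear form with $\mathcal B([x,y],z)=-\mathcal B(y,[x,z])$ and $\mathcal B(\llbracket x,y,z\rrbracket,w)=\mathcal B(x,\llbracket w,z,y\rrbracket)$. A Manin triple $((\mathfrak h,\mathcal B),\mathfrak h_1,\mathfrak h_2)$ is a quadratic Lie-Yamaguti algebra with $\mathfrak h=\mathfrak h_1\oplus\mathfrak h_2$, where $\mathfrak h_1,\mathfrak h_2$ are isotropic subalgebras (carrying their given structures), and for all $x_1,y_1\in\mathfrak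 h_1$, $x_2,y_2\in\mathfrak h_2$: $\mathrm{pr}_1\llbracket x_1,y_1,x_2\rrbracket=\mathrm{pr}_1\llbracket x_1,x_2,y_1\rrbracket=\mathrm{pr}_2\llbracket x_2,y_2,x_1\rrbracket=\mathrm{pr}_2\llbracket x_2,x_1,y_2\rrbracket=0$ ($\mathrm{pr}_i$ the projections onto $\mathfrak h_i$). *)

theory Defs
  imports Main "HOL-Library.Function_Algebras" "HOL-Library.Product_Plus"
begin

text \<open>A finite-dimensional vector space over a field 'k of characteristic zero is modelled as
  'n \<Rightarrow> 'k with 'n a finite index type; its dual is identified with 'n \<Rightarrow> 'k via the
  nondegenerate pairing below.\<close>

definition vsc :: "'k::field \<Rightarrow> ('n \<Rightarrow> 'k) \<Rightarrow> ('n \<Rightarrow> 'k)" where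
  "vsc c x = (\<lambda>i. c * x i)"

definition psc :: "'k::field \<Rightarrow> ('n \<Rightarrow> 'k) \<times> ('n \<Rightarrow> 'k) \<Rightarrow> ('n \<Rightarrow> 'k) \<times> ('n \<Rightarrow> 'k)" where
  "psc c p = (vsc c (fst p), vsc c (snd p))"

definition pair :: "('n::finite \<Rightarrow> 'k::field) \<Rightarrow> ('n \<Rightarrow> 'k) \<Rightarrow> 'k" where
  "pair x \<xi> = (\<Sum>i\<in>UNIV. x i * \<xi> i)"

definition ebas :: "'n \<Rightarrow> ('n \<Rightarrow> 'k::field)" where
  "ebas j = (\<lambda>i. if i = j then 1 else 0)"

definition LY_bilinear :: "('k \<Rightarrow> 'v::ab_group_add \<Rightarrow> 'v) \<Rightarrow> ('v \<Rightarrow> 'v \<Rightarrow> 'v) \<Rightarrow> bool" where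
  "LY_bilinear sc b \<longleftrightarrow>
     (\<forall>x y z. b (x + y) z = b x z + b y z \<and> b z (x + y) = b z x + b z y) \<and>
     (\<forall>c x y. b (sc c x) y = sc c (b x y) \<and> b x (sc c y) = sc c (b x y))"

definition LY_trilinear :: "('k \<Rightarrow> 'v::ab_group_add \<Rightarrow> 'v) \<Rightarrow> ('v \<Rightarrow> 'v \<Rightarrow> 'v \<Rightarrow> 'v) \<Rightarrow> bool" where
  "LY_trilinear sc t \<longleftrightarrow>
     (\<forall>x y z w. t (x + y) z w = t x z w + t y z w \<and> t z (x + y) w = t z x w + t z y w
        \<and> t z w (x + y) = t z w x + t z w y) \<and>
     (\<forall>c x y z. t (sc c x) y z = sc c (t x y z) \<and> t x (sc c y) z = sc c (t x y z)
        \<and> t x y (sc c z) = sc c (t x y z))"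

definition LY_algebra :: "('k \<Rightarrow> 'v::ab_group_add \<Rightarrow> 'v) \<Rightarrow> ('v \<Rightarrow> 'v \<Rightarrow> 'v) \<Rightarrow> ('v \<Rightarrow> 'v \<Rightarrow> 'v \<Rightarrow> 'v) \<Rightarrow> bool" where
  "LY_algebra sc br tr \<longleftrightarrow>
     LY_bilinear sc br \<and> LY_trilinear sc tr \<and>
     (\<forall>x y. br x y = - br y x) \<and>
     (\<forall>x y z. tr x y z = - tr y x z) \<and>
     (\<forall>x y z. br (br x y) z + br (br y z) x + br (br z x) y
               + tr x y z + tr y z x + tr z x y = 0) \<and>
     (\<forall>x y z w. tr (br x y) z w + tr (br y z) x w + tr (br z x) y w = 0) \<and>
     (\<forall>x y z w. tr x y (br z w) = br (tr x y z) w + br z (tr x y w)) \<and>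
     (\<forall>x y z w t. tr x y (tr z w t) = tr (tr x y z) w t + tr z (tr x y w) t + tr z w (tr x y t))"

text \<open>coad br x \<alpha> is ad^*_x \<alpha>: its j-th coordinate is \<langle>ad^*_x \<alpha>, e_j\<rangle> = - \<langle>\<alpha>, [x, e_j]\<rangle>.
  The same definitions serve on both sides (g acting on g^* and g^* acting on g).\<close>

definition coad :: "(('n::finite \<Rightarrow> 'k::field) \<Rightarrow> ('n \<Rightarrow> 'k) \<Rightarrow> ('n \<Rightarrow> 'k)) \<Rightarrow> ('n \<Rightarrow> 'k) \<Rightarrow> ('n \<Rightarrow> 'k) \<Rightarrow> ('n \<Rightarrow> 'k)" where
  "coad br x \<alpha> = (\<lambda>j. - pair \<alpha> (br x (ebas j)))"

definition coR :: "(('n::finite \<Rightarrow> 'k::field) \<Rightarrow> ('n \<Rightarrow> 'k) \<Rightarrow> ('n \<Rightarrow> 'k) \<Rightarrow> ('n \<Rightarrow> 'k)) \<Rightarrow> ('n \<Rightarrow> 'k) \<Rightarrow> ('n \<Rightarrow> 'k) \<Rightarrow> ('n \<Rightarrow> 'k) \<Rightarrow> ('n \<Rightarrow> 'k)" where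
  "coR tr x y \<alpha> = (\<lambda>j. - pair \<alpha> (tr (ebas j) x y))"

definition coL :: "(('n::finite \<Rightarrow> 'k::field) \<Rightarrow> ('n \<Rightarrow> 'k) \<Rightarrow> ('n \<Rightarrow> 'k) \<Rightarrow> ('n \<Rightarrow> 'k)) \<Rightarrow> ('n \<Rightarrow> 'k) \<Rightarrow> ('n \<Rightarrow> 'k) \<Rightarrow> ('n \<Rightarrow> 'k) \<Rightarrow> ('n \<Rightarrow> 'k)" where
  "coL tr x y \<alpha> = (\<lambda>j. - pair \<alpha> (tr x y (ebas j)))"

definition dbr :: "(('n::finite \<Rightarrow> 'k::field) \<Rightarrow> ('n \<Rightarrow> 'k) \<Rightarrow> ('n \<Rightarrow> 'k)) \<Rightarrow> (('n \<Rightarrow> 'k) \<Rightarrow> ('n \<Rightarrow> 'k) \<Rightarrow> ('n \<Rightarrow> 'k))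
     \<Rightarrow> ('n \<Rightarrow> 'k) \<times> ('n \<Rightarrow> 'k) \<Rightarrow> ('n \<Rightarrow> 'k) \<times> ('n \<Rightarrow> 'k) \<Rightarrow> ('n \<Rightarrow> 'k) \<times> ('n \<Rightarrow> 'k)" where
  "dbr br brs p q =
     (let x = fst p; \<xi> = snd p; y = fst q; \<eta> = snd q in
      (br x y + coad brs \<xi> y - coad brs \<eta> x,
       coad br x \<eta> - coad br y \<xi> + brs \<xi> \<eta>))"

definition dtr :: "(('n::finite \<Rightarrow> 'k::field) \<Rightarrow> ('n \<Rightarrow> 'k) \<Rightarrow> ('n \<Rightarrow> 'k) \<Rightarrow> ('n \<Rightarrow> 'k)) \<Rightarrow> (('n \<Rightarrow> 'k) \<Rightarrow> ('n \<Rightarrow> 'k) \<Rightarrow> ('n \<Rightarrow> 'k) \<Rightarrow> ('n \<Rightarrow> 'k))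
     \<Rightarrow> ('n \<Rightarrow> 'k) \<times> ('n \<Rightarrow> 'k) \<Rightarrow> ('n \<Rightarrow> 'k) \<times> ('n \<Rightarrow> 'k) \<Rightarrow> ('n \<Rightarrow> 'k) \<times> ('n \<Rightarrow> 'k) \<Rightarrow> ('n \<Rightarrow> 'k) \<times> ('n \<Rightarrow> 'k)" where
  "dtr tr trs p q r =
     (let x = fst p; \<xi> = snd p; y = fst q; \<eta> = snd q; z = fst r; \<zeta> = snd r in
      (tr x y z + coL trs \<xi> \<eta> z - coR trs \<zeta> \<eta> x + coR trs \<zeta> \<xi> y,
       coL tr x y \<zeta> - coR tr z y \<xi> + coR tr z x \<eta> + trs \<xi> \<eta> \<zeta>))"

definition matched_pair_dual :: "(('n::finite \<Rightarrow> 'k::field) \<Rightarrow> ('n \<Rightarrow> 'k) \<Rightarrow> ('n \<Rightarrow> 'k)) \<Rightarrow> (('n \<Rightarrow> 'k) \<Rightarrow> ('n \<Rightarrow> 'k) \<Rightarrow> ('n \<Rightarrow> 'k) \<Rightarrow> ('n \<Rightarrow> 'k)) \<Rightarrow> (('n \<Rightarrow> 'k) \<Rightarrow> ('n \<Rightarrow> 'k) \<Rightarrow> ('n \<Rightarrow> 'k)) \<Rightarrow> (('n \<Rightarrow> 'k) \<Rightarrow> ('n \<Rightarrow> 'k) \<Rightarrow> ('n \<Rightarrow> 'k) \<Rightarrow> ('n \<Rightarrow> 'k)) \<Rightarrow> bool" where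
  "matched_pair_dual br tr brs trs \<longleftrightarrow> LY_algebra psc (dbr br brs) (dtr tr trs)"

definition B0 :: "('n::finite \<Rightarrow> 'k::field) \<times> ('n \<Rightarrow> 'k) \<Rightarrow> ('n \<Rightarrow> 'k) \<times> ('n \<Rightarrow> 'k) \<Rightarrow> 'k" where
  "B0 p q = pair (fst p) (snd q) + pair (fst q) (snd p)"

definition quadratic_LY :: "('k::field \<Rightarrow> 'v::ab_group_add \<Rightarrow> 'v) \<Rightarrow> ('v \<Rightarrow> 'v \<Rightarrow> 'v) \<Rightarrow> ('v \<Rightarrow> 'v \<Rightarrow> 'v \<Rightarrow> 'v)
     \<Rightarrow> ('v \<Rightarrow> 'v \<Rightarrow> 'k) \<Rightarrow> bool" where
  "quadratic_LY sc br tr B \<longleftrightarrow>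
     LY_algebra sc br tr \<and>
     (\<forall>x y z. B (x + y) z = B x z + B y z) \<and> (\<forall>c x y. B (sc c x) y = c * B x y) \<and>
     (\<forall>x y. B x y = B y x) \<and>
     (\<forall>x. (\<forall>y. B x y = 0) \<longrightarrow> x = 0) \<and>
     (\<forall>x y z. B (br x y) z = - B y (br x z)) \<and>
     (\<forall>x y z w. B (tr x y z) w = B x (tr w z y))"

text \<open>Manin triple ((g \<oplus> g^*, B0), g, g^*) for a LY structure (br3, tr3) on g \<oplus> g^*,
  where g = {(x,0)} and g^* = {(0,\<xi>)} are isotropic subalgebras carrying their given structures.\<close>

definition manin_triple_dual :: "(('n::finite \<Rightarrow> 'k::field) \<Rightarrow> ('n \<Rightarrow> 'k) \<Rightarrow> ('n \<Rightarrow> 'k)) \<Rightarrow> (('n \<Rightarrow> 'k) \<Rightarrow> ('n \<Rightarrow> 'k) \<Rightarrow> ('n \<Rightarrow> 'k) \<Rightarrow> ('n \<Rightarrow> 'k)) \<Rightarrow> (('n \<Rightarrow> 'k) \<Rightarrow> ('n \<Rightarrow> 'k) \<Rightarrow> ('n \<Rightarrow> 'k)) \<Rightarrow> (('n \<Rightarrow> 'k) \<Rightarrow> ('n \<Rightarrow> 'k) \<Rightarrow> ('n \<Rightarrow> 'k) \<Rightarrow> ('n \<Rightarrow> 'k)) \<Rightarrow> ((('n \<Rightarrow> 'k) \<times> ('n \<Rightarrow> 'k)) \<Rightarrow> (('n \<Rightarrow> 'k) \<times> ('n \<Rightarrow> 'k)) \<Rightarrow> (('n \<Rightarrow> 'k)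 \<times> ('n \<Rightarrow> 'k))) \<Rightarrow> ((('n \<Rightarrow> 'k) \<times> ('n \<Rightarrow> 'k)) \<Rightarrow> (('n \<Rightarrow> 'k) \<times> ('n \<Rightarrow> 'k)) \<Rightarrow> (('n \<Rightarrow> 'k) \<times> ('n \<Rightarrow> 'k)) \<Rightarrow> (('n \<Rightarrow> 'k) \<times> ('n \<Rightarrow> 'k))) \<Rightarrow> bool" where
  "manin_triple_dual br tr brs trs br3 tr3 \<longleftrightarrow>
     quadratic_LY psc br3 tr3 B0 \<and>
     (\<forall>x y. B0 (x, 0::'n \<Rightarrow> 'k) (y, 0) = (0::'k)) \<and> (\<forall>\<xi> \<eta>. B0 (0::'n \<Rightarrow> 'k, \<xi>) (0, \<eta>) = (0::'k)) \<and>
     (\<forall>x y. br3 (x, 0) (y, 0) = (br x y, 0)) \<and>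
     (\<forall>x y z. tr3 (x, 0) (y, 0) (z, 0) = (tr x y z, 0)) \<and>
     (\<forall>\<xi> \<eta>. br3 (0, \<xi>) (0, \<eta>) = (0, brs \<xi> \<eta>)) \<and>
     (\<forall>\<xi> \<eta> \<zeta>. tr3 (0, \<xi>) (0, \<eta>) (0, \<zeta>) = (0, trs \<xi> \<eta> \<zeta>)) \<and>
     (\<forall>x1 y1 x2. fst (tr3 (x1, 0) (y1, 0) (0, x2)) = 0) \<and>
     (\<forall>x1 y1 x2. fst (tr3 (x1, 0) (0, x2) (y1, 0)) = 0) \<and>
     (\<forall>x1 x2 y2. snd (tr3 (0, x2) (0, y2) (x1, 0)) = 0) \<and>
     (\<forall>x1 x2 y2. snd (tr3 (0, x2) (x1, 0) (0, y2)) = 0)"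

end

theory Submission imports Defs begin

text \<open>The pairing \<open>B0\<close> is nondegenerate, so a bracket on the double is determined by the
  values \<open>B0 [p, q] r\<close>.  For a \<open>B0\<close>-invariant bracket extending the given ones on the two
  isotropic summands, bilinearity, skew-symmetry and invariance force every such value;
  for the ternary bracket the Manin conditions on the mixed components are needed as well.
  The forced values are exactly those of the double brackets, by the defining property of
  the coadjoint maps.  Hence the double brackets are the only candidate for a Manin triple,
  and they form one precisely when they define a Lie-Yamaguti algebra.\<close>

lemma sum_fun_apply: "finite A \<Longrightarrow> (\<Sum>j\<in>A. g j) i = (\<Sum>j\<in>A. g j i)"
  by (induction A rule: finite_induct) simp_all

lemma pair_comm: "pair x \<xi> = pair \<xi> x"
  unfolding pair_def by (simp add: mult.commute)

lemma pair_add_left [simp]: "pair (x + y) \<xi> = pair x \<xi> + pair y \<xi>"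
  unfolding pair_def by (simp add: distrib_right sum.distrib)

lemma pair_add_right [simp]: "pair \<xi> (x + y) = pair \<xi> x + pair \<xi> y"
  unfolding pair_def by (simp add: distrib_left sum.distrib)

lemma pair_minus_left [simp]: "pair (- x) \<xi> = - pair x \<xi>"
  unfolding pair_def by (simp add: sum_negf)

lemma pair_minus_right [simp]: "pair \<xi> (- x) = - pair \<xi> x"
  unfolding pair_def by (simp add: sum_negf)

lemma pair_diff_left [simp]: "pair (x - y) \<xi> = pair x \<xi> - pair y \<xi>"
  unfolding pair_def by (simp add: left_diff_distrib sum_subtractf)

lemma pair_diff_right [simp]: "pair \<xi> (x - y) = pair \<xi> x - pair \<xi> y"
  unfolding pair_def by (simp add: right_diff_distrib sum_subtractf)

lemma pair_zero_left [simp]: "pair 0 \<xi> = 0"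
  unfolding pair_def by simp

lemma pair_zero_right [simp]: "pair \<xi> 0 = 0"
  unfolding pair_def by simp

lemma pair_ebas_right [simp]: "pair x (ebas j) = x j"
  unfolding pair_def ebas_def by (simp add: if_distrib cong: if_cong)

lemma pair_ebas_left [simp]: "pair (ebas j) x = x j"
  using pair_comm pair_ebas_right by metis

lemma pair_sum_right: "finite A \<Longrightarrow> pair \<alpha> (\<Sum>j\<in>A. g j) = (\<Sum>j\<in>A. pair \<alpha> (g j))"
proof (induction A rule: finite_induct)
  case (insert x F)
  then show ?case by (metis sum.insert pair_add_right)
qed (metis sum.empty pair_zero_right)

lemma pair_vsc_left [simp]: "pair (vsc c x) \<xi> = c * pair x \<xi>"
  unfolding pair_def vsc_def by (simp add: sum_distrib_left mult.assoc)

lemma pair_vsc_right [simp]: "pair \<xi> (vsc c x) = c * pair \<xi> x"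
  unfolding pair_def vsc_def by (simp add: sum_distrib_left mult.left_commute)

definition vlinear :: "(('n \<Rightarrow> 'k::field) \<Rightarrow> ('n \<Rightarrow> 'k)) \<Rightarrow> bool" where
  "vlinear f \<longleftrightarrow> (\<forall>x y. f (x + y) = f x + f y) \<and> (\<forall>c x. f (vsc c x) = vsc c (f x))"

lemma vlinear_sum:
  assumes "vlinear f" "finite A"
  shows "f (\<Sum>j\<in>A. g j) = (\<Sum>j\<in>A. f (g j))"
proof -
  have add: "f (x + y) = f x + f y" for x y
    using assms(1) unfolding vlinear_def by blast
  from add have zero: "f 0 = 0"
    by (metis add_cancel_right_right)
  from assms(2) show ?thesis
  proof (induction A rule: finite_induct)
    case (insert x F)
    then show ?case by (metis sum.insert add)
  qed (metis sum.empty zero)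
qed

lemma pair_vlinear_expand:
  assumes "vlinear f"
  shows "pair \<alpha> (f z) = (\<Sum>j\<in>UNIV. z j * pair \<alpha> (f (ebas j)))"
proof -
  have "(\<Sum>j\<in>UNIV. vsc (z j) (ebas j)) = z"
    by (rule ext) (simp add: sum_fun_apply vsc_def ebas_def if_distrib cong: if_cong)
  then have "f z = (\<Sum>j\<in>UNIV. f (vsc (z j) (ebas j)))"
    using vlinear_sum[OF assms finite_UNIV, of "\<lambda>j. vsc (z j) (ebas j)"] by simp
  also have "\<dots> = (\<Sum>j\<in>UNIV. vsc (z j) (f (ebas j)))"
    using assms unfolding vlinear_def by simp
  finally show ?thesis
    by (simp add: pair_sum_right)
qed

lemma pair_coad:
  assumes "vlinear (br x)"
  shows "pair z (coad br x \<eta>) = - pair (br x z) \<eta>" "pair (coad br x \<eta>) z = - pair \<eta> (br x z)"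
proof -
  show "pair z (coad br x \<eta>) = - pair (br x z) \<eta>"
    unfolding coad_def using assms
    by (subst pair_comm, subst pair_vlinear_expand) (simp_all add: pair_def sum_negf)
  then show "pair (coad br x \<eta>) z = - pair \<eta> (br x z)"
    by (metis pair_comm)
qed

lemma pair_coL:
  assumes "vlinear (tr x y)"
  shows "pair z (coL tr x y \<alpha>) = - pair (tr x y z) \<alpha>" "pair (coL tr x y \<alpha>) z = - pair \<alpha> (tr x y z)"
proof -
  show "pair z (coL tr x y \<alpha>) = - pair (tr x y z) \<alpha>"
    unfolding coL_def using assms
    by (subst pair_comm, subst pair_vlinear_expand) (simp_all add: pair_def sum_negf)
  then show "pair (coL tr x y \<alpha>) z = - pair \<alpha> (tr x y z)"
    by (metis pair_comm)
qed

lemma pair_coR: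
  assumes "vlinear (\<lambda>z. tr z x y)"
  shows "pair z (coR tr x y \<alpha>) = - pair (tr z x y) \<alpha>" "pair (coR tr x y \<alpha>) z = - pair \<alpha> (tr z x y)"
proof -
  show "pair z (coR tr x y \<alpha>) = - pair (tr z x y) \<alpha>"
    unfolding coR_def using assms
    by (subst pair_comm, subst pair_vlinear_expand[of "\<lambda>z. tr z x y"]) (simp_all add: pair_def sum_negf)
  then show "pair (coR tr x y \<alpha>) z = - pair \<alpha> (tr z x y)"
    by (metis pair_comm)
qed

lemma coad_zero_right [simp]: "coad br x 0 = 0"
  unfolding coad_def by (rule ext) simp

lemma coL_zero_right [simp]: "coL tr x y 0 = 0"
  unfolding coL_def by (rule ext) simp

lemma coR_zero_right [simp]: "coR tr x y 0 = 0"
  unfolding coR_def by (rule ext) simp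

lemma coad_zero_left: "(\<And>y. br 0 y = 0) \<Longrightarrow> coad br 0 \<alpha> = 0"
  unfolding coad_def by (rule ext) simp

lemma coL_zero_left: "(\<And>y z. tr x y z = 0) \<Longrightarrow> coL tr x y \<alpha> = 0"
  unfolding coL_def by (rule ext) simp

lemma coR_zero_left: "(\<And>z. tr z x y = 0) \<Longrightarrow> coR tr x y \<alpha> = 0"
  unfolding coR_def by (rule ext) simp

lemma LY_bilinear_vlinear: "LY_bilinear vsc b \<Longrightarrow> vlinear (b x)"
  unfolding LY_bilinear_def vlinear_def by simp

lemma LY_trilinear_vlinear:
  assumes "LY_trilinear vsc t"
  shows "vlinear (t x y)" "vlinear (\<lambda>z. t z x y)"
  using assms unfolding LY_trilinear_def vlinear_def by simp_all

lemma LY_bilinear_zero: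
  assumes "LY_bilinear sc b"
  shows "b 0 y = 0" "b y 0 = 0"
proof -
  have "b 0 y = b 0 y + b 0 y" "b y 0 = b y 0 + b y 0"
    using assms unfolding LY_bilinear_def by (metis add_0)+
  then show "b 0 y = 0" "b y 0 = 0"
    by simp_all
qed

lemma LY_trilinear_zero:
  assumes "LY_trilinear sc t"
  shows "t 0 y z = 0" "t y 0 z = 0" "t y z 0 = 0"
proof -
  have "t 0 y z = t 0 y z + t 0 y z" "t y 0 z = t y 0 z + t y 0 z" "t y z 0 = t y z 0 + t y z 0"
    using assms unfolding LY_trilinear_def by (metis add_0)+
  then show "t 0 y z = 0" "t y 0 z = 0" "t y z 0 = 0"
    by simp_all
qed

lemma B0_sym: "B0 p q = B0 q p"
  unfolding B0_def by (simp add: add.commute)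

lemma B0_add_left [simp]: "B0 (p + q) r = B0 p r + B0 q r"
  unfolding B0_def by simp

lemma B0_add_right [simp]: "B0 r (p + q) = B0 r p + B0 r q"
  unfolding B0_def by simp

lemma B0_minus_left [simp]: "B0 (- p) r = - B0 p r"
  unfolding B0_def by simp

lemma B0_base_left [simp]: "B0 (x, 0) p = pair x (snd p)"
  unfolding B0_def by (simp add: pair_comm)

lemma B0_base_right [simp]: "B0 p (x, 0) = pair x (snd p)"
  unfolding B0_def by simp

lemma B0_dual_left [simp]: "B0 (0, \<xi>) p = pair (fst p) \<xi>"
  unfolding B0_def by (simp add: pair_comm)

lemma B0_dual_right [simp]: "B0 p (0, \<xi>) = pair (fst p) \<xi>"
  unfolding B0_def by (simp add: pair_comm)

lemma B0_eqI:
  assumes "\<And>r. B0 p r = B0 q r"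
  shows "p = q"
proof -
  have "fst p = fst q"
    using assms[of "(0, ebas j)" for j] by fastforce
  moreover have "snd p = snd q"
    using assms[of "(ebas j, 0)" for j] by fastforce
  ultimately show ?thesis
    by (simp add: prod_eq_iff)
qed

lemma Pair_eq_base_plus_dual: "(x, \<xi>) = (x, 0) + (0, \<xi>::'b::monoid_add)" for x :: "'a::monoid_add"
  by simp

lemma biadditive_expand:
  fixes b :: "'a::monoid_add \<times> 'b::monoid_add \<Rightarrow> 'a \<times> 'b \<Rightarrow> 'c::ab_semigroup_add"
  assumes "\<And>p q r. b (p + q) r = b p r + b q r" "\<And>p q r. b r (p + q) = b r p + b r q"
  shows "b (x, \<xi>) (y, \<eta>) = b (x, 0) (y, 0) + b (x, 0) (0, \<eta>) + b (0, \<xi>) (y, 0) + b (0, \<xi>) (0, \<eta>)"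
  by (subst (1 2) Pair_eq_base_plus_dual) (simp only: assms add_ac)

lemma triadditive_expand:
  fixes t :: "'a::monoid_add \<times> 'b::monoid_add \<Rightarrow> 'a \<times> 'b \<Rightarrow> 'a \<times> 'b \<Rightarrow> 'c::ab_semigroup_add"
  assumes "\<And>p q r s. t (p + q) r s = t p r s + t q r s"
    and "\<And>p q r s. t r (p + q) s = t r p s + t r q s"
    and "\<And>p q r s. t r s (p + q) = t r s p + t r s q"
  shows "t (x, \<xi>) (y, \<eta>) (z, \<zeta>) =
      t (x, 0) (y, 0) (z, 0) + t (x, 0) (y, 0) (0, \<zeta>) + t (x, 0) (0, \<eta>) (z, 0)
    + t (x, 0) (0, \<eta>) (0, \<zeta>) + t (0, \<xi>) (y, 0) (z, 0) + t (0, \<xi>) (y, 0) (0, \<zeta>)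
    + t (0, \<xi>) (0, \<eta>) (z, 0) + t (0, \<xi>) (0, \<eta>) (0, \<zeta>)"
  by (subst (1 2 3) Pair_eq_base_plus_dual) (simp only: assms add_ac)

definition dbr_pairing ::
    "(('n::finite \<Rightarrow> 'k::field) \<Rightarrow> ('n \<Rightarrow> 'k) \<Rightarrow> ('n \<Rightarrow> 'k)) \<Rightarrow> (('n \<Rightarrow> 'k) \<Rightarrow> ('n \<Rightarrow> 'k) \<Rightarrow> ('n \<Rightarrow> 'k))
     \<Rightarrow> ('n \<Rightarrow> 'k) \<Rightarrow> ('n \<Rightarrow> 'k) \<Rightarrow> ('n \<Rightarrow> 'k) \<Rightarrow> ('n \<Rightarrow> 'k) \<Rightarrow> ('n \<Rightarrow> 'k) \<Rightarrow> ('n \<Rightarrow> 'k) \<Rightarrow> 'k" where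
  "dbr_pairing br brs x \<xi> y \<eta> z \<zeta> =
     pair (br x y) \<zeta> - pair y (brs \<xi> \<zeta>) + pair x (brs \<eta> \<zeta>)
     - pair (br x z) \<eta> + pair (br y z) \<xi> + pair z (brs \<xi> \<eta>)"

definition dtr_pairing ::
    "(('n::finite \<Rightarrow> 'k::field) \<Rightarrow> ('n \<Rightarrow> 'k) \<Rightarrow> ('n \<Rightarrow> 'k) \<Rightarrow> ('n \<Rightarrow> 'k))
     \<Rightarrow> (('n \<Rightarrow> 'k) \<Rightarrow> ('n \<Rightarrow> 'k) \<Rightarrow> ('n \<Rightarrow> 'k) \<Rightarrow> ('n \<Rightarrow> 'k))
     \<Rightarrow> ('n \<Rightarrow> 'k) \<Rightarrow> ('n \<Rightarrow> 'k) \<Rightarrow> ('n \<Rightarrow> 'k) \<Rightarrow> ('n \<Rightarrow> 'k) \<Rightarrow> ('n \<Rightarrow> 'k) \<Rightarrow> ('n \<Rightarrow> 'k)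
     \<Rightarrow> ('n \<Rightarrow> 'k) \<Rightarrow> ('n \<Rightarrow> 'k) \<Rightarrow> 'k" where
  "dtr_pairing tr trs x \<xi> y \<eta> z \<zeta> w \<omega> =
     pair (tr x y z) \<omega> - pair z (trs \<xi> \<eta> \<omega>) + pair x (trs \<omega> \<zeta> \<eta>) - pair y (trs \<omega> \<zeta> \<xi>)
     - pair (tr x y w) \<zeta> + pair (tr w z y) \<xi> - pair (tr w z x) \<eta> + pair w (trs \<xi> \<eta> \<zeta>)"

lemma B0_invariant_bracket:
  fixes b :: "('n::finite \<Rightarrow> 'k::field) \<times> ('n \<Rightarrow> 'k) \<Rightarrow> ('n \<Rightarrow> 'k) \<times> ('n \<Rightarrow> 'k) \<Rightarrow> ('n \<Rightarrow> 'k) \<times> ('n \<Rightarrow> 'k)"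
  assumes add_left: "\<And>p q r. b (p + q) r = b p r + b q r"
    and add_right: "\<And>p q r. b r (p + q) = b r p + b r q"
    and skew: "\<And>p q. b p q = - b q p"
    and invariant: "\<And>p q r. B0 (b p q) r = - B0 q (b p r)"
    and on_base: "\<And>x y. b (x, 0) (y, 0) = (br x y, 0)"
    and on_dual: "\<And>\<xi> \<eta>. b (0, \<xi>) (0, \<eta>) = (0, brs \<xi> \<eta>)"
  shows "B0 (b (x, \<xi>) (y, \<eta>)) (z, \<zeta>) = dbr_pairing br brs x \<xi> y \<eta> z \<zeta>"
proof -
  have mixed: "B0 (b (a, 0) (0, \<eta>')) (c, \<zeta>') = pair a (brs \<eta>' \<zeta>') - pair (br a c) \<eta>'"
    for a c \<eta>' \<zeta>'
  proof -
    have "B0 (b (a, 0) (0, \<eta>')) (c, 0) = - pair (br a c) \<eta>'"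
      using invariant[of "(a, 0)" "(0, \<eta>')" "(c, 0)"] by (simp add: on_base)
    moreover have "B0 (b (a, 0) (0, \<eta>')) (0, \<zeta>') = pair a (brs \<eta>' \<zeta>')"
      using skew[of "(a, 0)"] invariant[of "(0, \<eta>')" "(a, 0)" "(0, \<zeta>')"] by (simp add: on_dual)
    ultimately show ?thesis
      by (simp add: B0_def)
  qed
  have "B0 (b (0, \<xi>) (y, 0)) (z, \<zeta>) = pair (br y z) \<xi> - pair y (brs \<xi> \<zeta>)"
    unfolding skew[of "(0, \<xi>)" "(y, 0)"] B0_minus_left mixed by simp
  with mixed[of x \<eta> z \<zeta>] show ?thesis
    unfolding biadditive_expand[of b x \<xi> y \<eta>, OF add_left add_right] dbr_pairing_def
    by (simp add: on_base on_dual)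
qed

lemma B0_eq_base_if_fst_zero: "fst p = 0 \<Longrightarrow> B0 p (x, \<xi>) = B0 p (x, 0)"
  unfolding B0_def by simp

lemma B0_eq_dual_if_snd_zero: "snd p = 0 \<Longrightarrow> B0 p (x, \<xi>) = B0 p (0, \<xi>)"
  unfolding B0_def by simp

lemma B0_invariant_triple_cyclic:
  assumes "\<And>p q r s. B0 (t p q r) s = B0 p (t s r q)"
  shows "B0 (t p q r) s = B0 (t s r q) p"
  by (metis assms B0_sym)

lemma B0_invariant_triple_swap:
  assumes invariant: "\<And>p q r s. B0 (t p q r) s = B0 p (t s r q)"
    and skew: "\<And>p q r. t p q r = - t q p r"
  shows "B0 (t p q r) s = - B0 (t p q s) r"
proof -
  have "B0 (t p q r) s = B0 (t s r q) p"
    by (rule B0_invariant_triple_cyclic[of t, OF invariant])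
  also have "\<dots> = - B0 (t r s q) p"
    unfolding skew[of s r q] by simp
  also have "\<dots> = - B0 (t p q s) r"
    by (simp only: B0_invariant_triple_cyclic[of t r s q p, OF invariant])
  finally show ?thesis .
qed

lemma B0_invariant_triple:
  fixes t :: "('n::finite \<Rightarrow> 'k::field) \<times> ('n \<Rightarrow> 'k) \<Rightarrow> ('n \<Rightarrow> 'k) \<times> ('n \<Rightarrow> 'k)
              \<Rightarrow> ('n \<Rightarrow> 'k) \<times> ('n \<Rightarrow> 'k) \<Rightarrow> ('n \<Rightarrow> 'k) \<times> ('n \<Rightarrow> 'k)"
  assumes add1: "\<And>p q r s. t (p + q) r s = t p r s + t q r s"
    and add2: "\<And>p q r s. t r (p + q) s = t r p s + t r q s"
    and add3: "\<And>p q r s. t r s (p + q) = t r s p + t r s q"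
    and skew: "\<And>p q r. t p q r = - t q p r"
    and invariant: "\<And>p q r s. B0 (t p q r) s = B0 p (t s r q)"
    and on_base: "\<And>x y z. t (x, 0) (y, 0) (z, 0) = (tr x y z, 0)"
    and on_dual: "\<And>\<xi> \<eta> \<zeta>. t (0, \<xi>) (0, \<eta>) (0, \<zeta>) = (0, trs \<xi> \<eta> \<zeta>)"
    and base_base_dual: "\<And>x y \<xi>. fst (t (x, 0) (y, 0) (0, \<xi>)) = 0"
    and base_dual_base: "\<And>x y \<xi>. fst (t (x, 0) (0, \<xi>) (y, 0)) = 0"
    and dual_dual_base: "\<And>x \<xi> \<eta>. snd (t (0, \<xi>) (0, \<eta>) (x, 0)) = 0"
    and dual_base_dual: "\<And>x \<xi> \<eta>. snd (t (0, \<xi>) (x, 0) (0, \<eta>)) = 0"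
  shows "B0 (t (x, \<xi>) (y, \<eta>) (z, \<zeta>)) (w, \<omega>) = dtr_pairing tr trs x \<xi> y \<eta> z \<zeta> w \<omega>"
proof -
  note cyclic = B0_invariant_triple_cyclic[of t, OF invariant]
  note swap = B0_invariant_triple_swap[of t, OF invariant skew]
  have bbd: "B0 (t (a, 0) (b, 0) (0, \<gamma>)) (d, \<delta>) = - pair (tr a b d) \<gamma>" for a b d \<gamma> \<delta>
    using swap[of "(a, 0)" "(b, 0)" "(0, \<gamma>)" "(d, 0)"]
    by (simp add: B0_eq_base_if_fst_zero[OF base_base_dual] on_base)
  have bdb: "B0 (t (a, 0) (0, \<gamma>) (b, 0)) (d, \<delta>) = - pair (tr d b a) \<gamma>" for a b d \<gamma> \<delta>
    using cyclic[of "(a, 0)" "(0, \<gamma>)" "(b, 0)" "(d, 0)"] bbd[of d b \<gamma> a 0]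
    by (simp add: B0_eq_base_if_fst_zero[OF base_dual_base])
  have ddb: "B0 (t (0, \<alpha>) (0, \<beta>) (c, 0)) (d, \<delta>) = - pair c (trs \<alpha> \<beta> \<delta>)" for \<alpha> \<beta> c d \<delta>
    using swap[of "(0, \<alpha>)" "(0, \<beta>)" "(c, 0)" "(0, \<delta>)"]
    by (simp add: B0_eq_dual_if_snd_zero[OF dual_dual_base] on_dual)
  have dbd: "B0 (t (0, \<alpha>) (c, 0) (0, \<beta>)) (d, \<delta>) = - pair c (trs \<delta> \<beta> \<alpha>)" for \<alpha> \<beta> c d \<delta>
    using cyclic[of "(0, \<alpha>)" "(c, 0)" "(0, \<beta>)" "(0, \<delta>)"] ddb[of \<delta> \<beta> c 0 \<alpha>]
    by (simp add: B0_eq_dual_if_snd_zero[OF dual_base_dual])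
  have dbb: "B0 (t (0, \<xi>) (y, 0) (z, 0)) (w, \<omega>) = pair (tr w z y) \<xi>"
    unfolding skew[of "(0, \<xi>)" "(y, 0)"] B0_minus_left bdb by simp
  have bdd: "B0 (t (x, 0) (0, \<eta>) (0, \<zeta>)) (w, \<omega>) = pair x (trs \<omega> \<zeta> \<eta>)"
    unfolding skew[of "(x, 0)" "(0, \<eta>)"] B0_minus_left dbd by simp
  show ?thesis
    unfolding triadditive_expand[of t x \<xi> y \<eta> z \<zeta>, OF add1 add2 add3] dtr_pairing_def
    by (simp add: on_base on_dual bbd bdb ddb dbd dbb bdd)
qed

lemma B0_dbr:
  assumes "LY_bilinear vsc br" "LY_bilinear vsc brs"
  shows "B0 (dbr br brs (x, \<xi>) (y, \<eta>)) (z, \<zeta>) = dbr_pairing br brs x \<xi> y \<eta> z \<zeta>"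
  unfolding B0_def dbr_def dbr_pairing_def
  by (simp add: pair_coad LY_bilinear_vlinear assms)

lemma B0_dtr:
  assumes "LY_trilinear vsc tr" "LY_trilinear vsc trs"
  shows "B0 (dtr tr trs (x, \<xi>) (y, \<eta>) (z, \<zeta>)) (w, \<omega>) = dtr_pairing tr trs x \<xi> y \<eta> z \<zeta> w \<omega>"
  unfolding B0_def dtr_def dtr_pairing_def
  by (simp add: pair_coL pair_coR LY_trilinear_vlinear assms)

lemma manin_triple_dual_unique:
  assumes g: "LY_algebra vsc br tr" and d: "LY_algebra vsc brs trs"
    and M: "manin_triple_dual br tr brs trs br3 tr3"
  shows "br3 = dbr br brs" "tr3 = dtr tr trs"
proof -
  have lin: "LY_bilinear vsc br" "LY_trilinear vsc tr" "LY_bilinear vsc brs" "LY_trilinear vsc trs"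
    using g d by (simp_all add: LY_algebra_def)
  note M' = M[unfolded manin_triple_dual_def quadratic_LY_def LY_algebra_def LY_bilinear_def LY_trilinear_def]
  have br3: "B0 (br3 (x, \<xi>) (y, \<eta>)) (z, \<zeta>) = dbr_pairing br brs x \<xi> y \<eta> z \<zeta>" for x \<xi> y \<eta> z \<zeta>
    by (rule B0_invariant_bracket; use M' in metis)
  have tr3: "B0 (tr3 (x, \<xi>) (y, \<eta>) (z, \<zeta>)) (w, \<omega>) = dtr_pairing tr trs x \<xi> y \<eta> z \<zeta> w \<omega>"
    for x \<xi> y \<eta> z \<zeta> w \<omega>
    by (rule B0_invariant_triple; use M' in metis)
  show "br3 = dbr br brs"
  proof (intro ext B0_eqI)
    fix p q r
    show "B0 (br3 p q) r = B0 (dbr br brs p q) r"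
      using br3 B0_dbr[OF lin(1,3)]
      by (cases p, cases q, cases r) simp
  qed
  show "tr3 = dtr tr trs"
  proof (intro ext B0_eqI)
    fix p q r s
    show "B0 (tr3 p q r) s = B0 (dtr tr trs p q r) s"
      using tr3 B0_dtr[OF lin(2,4)]
      by (cases p, cases q, cases r, cases s) simp
  qed
qed

lemma dbr_pairing_swap:
  assumes "\<And>x y. br x y = - br y x" "\<And>\<xi> \<eta>. brs \<xi> \<eta> = - brs \<eta> \<xi>"
  shows "dbr_pairing br brs x \<xi> z \<zeta> y \<eta> = - dbr_pairing br brs x \<xi> y \<eta> z \<zeta>"
  unfolding dbr_pairing_def using assms[of z y] assms(2)[of \<zeta> \<eta>] by simp

lemma dtr_pairing_reverse:
  "dtr_pairing tr trs w \<omega> z \<zeta> y \<eta> x \<xi> = dtr_pairing tr trs x \<xi> y \<eta> z \<zeta> w \<omega>"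
  unfolding dtr_pairing_def by (simp add: algebra_simps)

lemma quadratic_LY_double:
  assumes g: "LY_algebra vsc br tr" and d: "LY_algebra vsc brs trs"
    and LY: "LY_algebra psc (dbr br brs) (dtr tr trs)"
  shows "quadratic_LY psc (dbr br brs) (dtr tr trs) B0"
  unfolding quadratic_LY_def
proof (intro conjI allI impI LY)
  have lin: "LY_bilinear vsc br" "LY_trilinear vsc tr" "LY_bilinear vsc brs" "LY_trilinear vsc trs"
    using g d by (simp_all add: LY_algebra_def)
  have skew: "br x y = - br y x" "brs \<xi> \<eta> = - brs \<eta> \<xi>" for x y \<xi> \<eta>
    using g d unfolding LY_algebra_def by metis+
  note B0_dbr = B0_dbr[OF lin(1,3)]
  note B0_dtr = B0_dtr[OF lin(2,4)]
  show "B0 (p + q) r = B0 p r + B0 q r" "B0 p q = B0 q p" for p q r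
    by (simp_all add: B0_sym)
  show "B0 (psc c p) q = c * B0 p q" for c p q
    unfolding psc_def B0_def by (simp add: algebra_simps)
  show "p = 0" if "\<forall>q. B0 p q = 0" for p
    using that by (intro B0_eqI) (simp add: B0_def)
  show "B0 (dbr br brs p q) r = - B0 q (dbr br brs p r)" for p q r
  proof -
    obtain x \<xi> y \<eta> z \<zeta> where "p = (x, \<xi>)" "q = (y, \<eta>)" "r = (z, \<zeta>)"
      by (cases p, cases q, cases r) blast
    then show ?thesis
      by (simp only: B0_dbr dbr_pairing_swap[of br brs x \<xi> y \<eta> z \<zeta>, OF skew]
          B0_sym[of "(y, \<eta>)"])
  qed
  show "B0 (dtr tr trs p q r) s = B0 p (dtr tr trs s r q)" for p q r s
  proof -
    obtain x \<xi> y \<eta> z \<zeta> w \<omega> where "p = (x, \<xi>)" "q = (y, \<eta>)" "r = (z, \<zeta>)" "s = (w, \<omega>)"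
      by (cases p, cases q, cases r, cases s) blast
    then show ?thesis
      by (simp only: B0_dtr dtr_pairing_reverse[of tr trs x \<xi>] B0_sym[of "(x, \<xi>)"])
  qed
qed

lemma manin_triple_dual_double:
  assumes g: "LY_algebra vsc br tr" and d: "LY_algebra vsc brs trs"
    and LY: "LY_algebra psc (dbr br brs) (dtr tr trs)"
  shows "manin_triple_dual br tr brs trs (dbr br brs) (dtr tr trs)"
proof -
  have zero: "br 0 y = 0" "brs 0 \<eta> = 0" "tr 0 y z = 0" "tr y z 0 = 0" "tr y 0 z = 0"
      "trs 0 \<eta> \<zeta> = 0" "trs \<eta> \<zeta> 0 = 0" "trs \<eta> 0 \<zeta> = 0" for y z \<eta> \<zeta>
    using g d LY_bilinear_zero LY_trilinear_zero unfolding LY_algebra_def by metis+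
  then have "coad br 0 \<alpha> = 0" "coad brs 0 \<alpha> = 0" for \<alpha>
    by (simp_all add: coad_zero_left)
  with zero show ?thesis
    unfolding manin_triple_dual_def
    by (simp add: quadratic_LY_double[OF g d LY] dbr_def dtr_def coL_zero_left coR_zero_left B0_def)
qed

theorem proposition4p8:
  fixes br :: "('n::finite \<Rightarrow> 'k::field_char_0) \<Rightarrow> ('n \<Rightarrow> 'k) \<Rightarrow> ('n \<Rightarrow> 'k)"
    and tr :: "('n \<Rightarrow> 'k) \<Rightarrow> ('n \<Rightarrow> 'k) \<Rightarrow> ('n \<Rightarrow> 'k) \<Rightarrow> ('n \<Rightarrow> 'k)"
    and brs :: "('n \<Rightarrow> 'k) \<Rightarrow> ('n \<Rightarrow> 'k) \<Rightarrow> ('n \<Rightarrow> 'k)"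
    and trs :: "('n \<Rightarrow> 'k) \<Rightarrow> ('n \<Rightarrow> 'k) \<Rightarrow> ('n \<Rightarrow> 'k) \<Rightarrow> ('n \<Rightarrow> 'k)"
  assumes "LY_algebra vsc br tr"
    and "LY_algebra vsc brs trs"
  shows "(matched_pair_dual br tr brs trs \<longleftrightarrow> (\<exists>br3 tr3. manin_triple_dual br tr brs trs br3 tr3))
         \<and> (\<forall>br3 tr3. manin_triple_dual br tr brs trs br3 tr3 \<longrightarrow> br3 = dbr br brs \<and> tr3 = dtr tr trs)"
proof -
  have unique: "br3 = dbr br brs \<and> tr3 = dtr tr trs"
    if "manin_triple_dual br tr brs trs br3 tr3" for br3 tr3
    using manin_triple_dual_unique[OF assms that] by blast
  have "matched_pair_dual br tr brs trs \<longleftrightarrow> manin_triple_dual br tr brs trs (dbr br brs) (dtr tr trs)"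
    using manin_triple_dual_double[OF assms]
    by (auto simp: matched_pair_dual_def manin_triple_dual_def quadratic_LY_def)
  with unique show ?thesis
    by blast
qed

end
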